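(* The sets $\{123,2413\}$ and $\{132,2314\}$ are forest-Wilf equivalent, and the sets $\{123,3142\}$ and $\{132,3124\}$ are forest-Wilf equivalent.
   Context: A rooted labeled forest on $[n]$ is an unordered forest on $n$ vertices, each component with a distinguished root, with distinct labels from $[n]$. For a permutation (pattern) $\pi$ of $[k]$, an instance of $\pi$ is a sequence of vertices $v_1,\dots,v_k$ with $v_i$ a strict ancestor of $v_{i+1}$ whose labels are in the same relative order as $\pi$; a forest avoids a set of patterns if it has no instance of any of them. Two sets $S,S'$ are forest-Wilf equivalent if for every $n\ge0$ the number of rooted labeled forests on $[n]$ avoiding $S$ equals the number avoiding $S'$. *)

theory Defs
  imports Main
begin

text \<open>A rooted labeled forest on [n] is encoded by its parent map: vertices are
identified with their labels 1..n; par v = None means v is a root, par v = Some u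
means u is the parent of v.\<close>

definition parent_rel :: "(nat \<Rightarrow> nat option) \<Rightarrow> (nat \<times> nat) set" where
  "parent_rel par = {(u, v). par v = Some u}"

definition strict_anc :: "(nat \<Rightarrow> nat option) \<Rightarrow> (nat \<times> nat) set" where
  "strict_anc par = (parent_rel par)\<^sup>+"

definition is_forest :: "nat \<Rightarrow> (nat \<Rightarrow> nat option) \<Rightarrow> bool" where
  "is_forest n par \<longleftrightarrow>
     (\<forall>v. v \<notin> {1..n} \<longrightarrow> par v = None) \<and>
     (\<forall>v\<in>{1..n}. \<forall>u. par v = Some u \<longrightarrow> u \<in> {1..n}) \<and>
     (\<forall>v. (v, v) \<notin> strict_anc par)"

text \<open>Patterns are permutations of [k] written as lists, e.g. 2413 = [2,4,1,3].\<close>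
definition is_instance :: "(nat \<Rightarrow> nat option) \<Rightarrow> nat list \<Rightarrow> nat list \<Rightarrow> bool" where
  "is_instance par pat vs \<longleftrightarrow>
     length vs = length pat \<and>
     (\<forall>i. Suc i < length vs \<longrightarrow> (vs ! i, vs ! Suc i) \<in> strict_anc par) \<and>
     (\<forall>i<length vs. \<forall>j<length vs. vs ! i < vs ! j \<longleftrightarrow> pat ! i < pat ! j)"

definition avoids :: "(nat \<Rightarrow> nat option) \<Rightarrow> nat list set \<Rightarrow> bool" where
  "avoids par S \<longleftrightarrow> (\<forall>pat\<in>S. \<not> (\<exists>vs. is_instance par pat vs))"

definition num_avoiding :: "nat \<Rightarrow> nat list set \<Rightarrow> nat" where
  "num_avoiding n S = card {par. is_forest n par \<and> avoids par S}"

definition forest_wilf_equiv :: "nat list set \<Rightarrow> nat list set \<Rightarrow> bool" where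
  "forest_wilf_equiv S S' \<longleftrightarrow> (\<forall>n. num_avoiding n S = num_avoiding n S')"

end

theory Submission
  imports Defs
begin

text \<open>
  Call a vertex a record if it is smaller than all its strict ancestors. Both bijections keep
  the shape of the forest and the labels of the records, group the other vertices into classes
  by a key, and reverse the order of the labels inside each class. The key is the minimum of
  the ancestors for the first pair and the largest record ancestor below the vertex for the
  second; it is the same before and after the flip, so the flip is an involution.

  Avoiding \<open>{123, 2413}\<close> means that along every path the non-records with a common minimum
  decrease, and that a descendant with a new minimum lies below the old one; avoiding
  \<open>{132, 2314}\<close> is the same with "increase" for "decrease", and the flip swaps the two.
  For the second pair the flip reverses the order of an ancestor and a descendant exactly when
  both lie in the same class, and a case analysis turns each occurrence of \<open>123\<close> or \<open>3142\<close>
  into an occurrence of \<open>132\<close> or \<open>3124\<close> in the flipped forest and vice versa.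
\<close>

section \<open>Reversing a finite linear order\<close>

definition rev_order :: "'a::linorder set \<Rightarrow> 'a \<Rightarrow> 'a" where
  "rev_order K x =
     (let xs = sorted_list_of_set K in rev xs ! (THE i. i < length xs \<and> xs ! i = x))"

lemma rev_order_nth:
  assumes "finite K" and "i < card K"
  shows "rev_order K (sorted_list_of_set K ! i) = sorted_list_of_set K ! (card K - Suc i)"
proof -
  let ?xs = "sorted_list_of_set K"
  have "(THE j. j < length ?xs \<and> ?xs ! j = ?xs ! i) = i"
    using assms by (intro the_equality) (auto simp: nth_eq_iff_index_eq)
  then show ?thesis
    using assms by (simp add: rev_order_def rev_nth)
qed

lemma sorted_list_of_set_nthE:
  assumes "finite K" and "x \<in> K"
  obtains i where "i < card K" and "x = sorted_list_of_set K ! i"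
  using assms by (metis in_set_conv_nth length_sorted_list_of_set set_sorted_list_of_set)

lemma rev_order_in:
  assumes "finite K" and "x \<in> K"
  shows "rev_order K x \<in> K"
proof -
  obtain i where "i < card K" and "x = sorted_list_of_set K ! i"
    using assms by (rule sorted_list_of_set_nthE)
  then show ?thesis
    using assms nth_mem[of "card K - Suc i" "sorted_list_of_set K"] by (simp add: rev_order_nth)
qed

lemma rev_order_rev_order:
  assumes "finite K" and "x \<in> K"
  shows "rev_order K (rev_order K x) = x"
proof -
  obtain i where "i < card K" and "x = sorted_list_of_set K ! i"
    using assms by (rule sorted_list_of_set_nthE)
  then show ?thesis
    using assms by (simp add: rev_order_nth)
qed

lemma rev_order_strict_antimono:
  assumes K: "finite K" and "x \<in> K" "y \<in> K" and "x < y"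
  shows "rev_order K y < rev_order K x"
proof -
  let ?xs = "sorted_list_of_set K"
  obtain i j where ij: "i < card K" "x = ?xs ! i" "j < card K" "y = ?xs ! j"
    using K \<open>x \<in> K\<close> \<open>y \<in> K\<close> by (metis sorted_list_of_set_nthE)
  have "i < j"
    using ij \<open>x < y\<close> K sorted_nth_mono[OF sorted_sorted_list_of_set, of j i]
    by (fastforce simp: not_less[symmetric])
  then have "?xs ! (card K - Suc j) < ?xs ! (card K - Suc i)"
    using ij K by (intro sorted_wrt_nth_less[OF strict_sorted_list_of_set]) auto
  then show ?thesis
    using ij K by (simp add: rev_order_nth)
qed

section \<open>Ancestors and relabelling\<close>

lemma strict_anc_trans:
  "(u, v) \<in> strict_anc par \<Longrightarrow> (v, w) \<in> strict_anc par \<Longrightarrow> (u, w) \<in> strict_anc par"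
  unfolding strict_anc_def by (rule trancl_trans)

lemma strict_anc_linear:
  assumes "(x, v) \<in> strict_anc par" and "(y, v) \<in> strict_anc par"
  shows "x = y \<or> (x, y) \<in> strict_anc par \<or> (y, x) \<in> strict_anc par"
proof -
  let ?r = "(parent_rel par)\<inverse>"
  have "single_valued ?r"
    by (auto simp: single_valued_def parent_rel_def)
  moreover have "(v, x) \<in> ?r\<^sup>*" and "(v, y) \<in> ?r\<^sup>*"
    using assms by (auto simp: strict_anc_def rtrancl_converse)
  ultimately have "(x, y) \<in> ?r\<^sup>* \<or> (y, x) \<in> ?r\<^sup>*"
    by (rule single_valued_confluent)
  then show ?thesis
    by (auto simp: strict_anc_def rtrancl_converse rtrancl_eq_or_trancl)
qed

definition relabel :: "(nat \<Rightarrow> nat) \<Rightarrow> (nat \<Rightarrow> nat option) \<Rightarrow> nat \<Rightarrow> nat option" where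
  "relabel \<pi> par = (\<lambda>x. map_option \<pi> (par (\<pi> x)))"

lemma relabel_relabel:
  assumes "\<And>x. \<pi> (\<pi> x) = x"
  shows "relabel \<pi> (relabel \<pi> par) = par"
proof
  fix x
  show "relabel \<pi> (relabel \<pi> par) x = par x"
    by (cases "par x") (simp_all add: relabel_def assms)
qed

lemma strict_anc_imp_strict_anc_relabel:
  assumes inv: "\<And>x. \<pi> (\<pi> x) = x" and "(x, y) \<in> strict_anc par"
  shows "(\<pi> x, \<pi> y) \<in> strict_anc (relabel \<pi> par)"
  using assms(2) unfolding strict_anc_def
proof (induction rule: trancl_induct)
  case (base y)
  then show ?case
    using inv by (auto simp: parent_rel_def relabel_def)
next
  case (step y z)
  then have "(\<pi> y, \<pi> z) \<in> parent_rel (relabel \<pi> par)"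
    using inv by (auto simp: parent_rel_def relabel_def)
  with step.IH show ?case
    by (rule trancl_into_trancl)
qed

lemma strict_anc_relabel:
  assumes inv: "\<And>x. \<pi> (\<pi> x) = x"
  shows "(x, y) \<in> strict_anc (relabel \<pi> par) \<longleftrightarrow> (\<pi> x, \<pi> y) \<in> strict_anc par"
  using strict_anc_imp_strict_anc_relabel[OF inv, of "\<pi> x" "\<pi> y" par]
    strict_anc_imp_strict_anc_relabel[OF inv, of x y "relabel \<pi> par"]
  by (auto simp: inv relabel_relabel[OF inv])

lemma is_forest_relabel:
  assumes forest: "is_forest n par" and inv: "\<And>x. \<pi> (\<pi> x) = x"
    and range: "\<And>x. \<pi> x \<in> {1..n} \<longleftrightarrow> x \<in> {1..n}"
  shows "is_forest n (relabel \<pi> par)"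
  unfolding is_forest_def
proof (intro conjI allI ballI impI)
  fix v
  assume "v \<notin> {1..n}"
  then have "par (\<pi> v) = None"
    using forest range unfolding is_forest_def by blast
  then show "relabel \<pi> par v = None"
    by (simp add: relabel_def)
next
  fix v u
  assume "v \<in> {1..n}" and "relabel \<pi> par v = Some u"
  then obtain u' where "par (\<pi> v) = Some u'" and "u = \<pi> u'" and "\<pi> v \<in> {1..n}"
    using range by (auto simp: relabel_def)
  then show "u \<in> {1..n}"
    using forest range unfolding is_forest_def by blast
next
  fix v
  show "(v, v) \<notin> strict_anc (relabel \<pi> par)"
    using forest unfolding is_forest_def strict_anc_relabel[OF inv] by blast
qed

section \<open>Records\<close>

definition is_record :: "(nat \<Rightarrow> nat option) \<Rightarrow> nat \<Rightarrow> bool" where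
  "is_record par v \<longleftrightarrow> \<not> (\<exists>u. (u, v) \<in> strict_anc par \<and> u < v)"

definition min_anc :: "(nat \<Rightarrow> nat option) \<Rightarrow> nat \<Rightarrow> nat" where
  "min_anc par v = Min {u. (u, v) \<in> strict_anc par}"

definition max_record_below :: "(nat \<Rightarrow> nat option) \<Rightarrow> nat \<Rightarrow> nat" where
  "max_record_below par v = Max {m. is_record par m \<and> (m, v) \<in> strict_anc par \<and> m < v}"

locale labelled_forest =
  fixes n :: nat and par :: "nat \<Rightarrow> nat option"
  assumes forest: "is_forest n par"
begin

lemma strict_anc_irrefl: "(v, v) \<notin> strict_anc par"
  using forest by (simp add: is_forest_def)

lemma parent_in_range:
  assumes "par v = Some u"
  shows "u \<in> {1..n}" and "v \<in> {1..n}"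
proof -
  have outside: "\<forall>v. v \<notin> {1..n} \<longrightarrow> par v = None"
    and inside: "\<forall>v\<in>{1..n}. \<forall>u. par v = Some u \<longrightarrow> u \<in> {1..n}"
    using forest unfolding is_forest_def by blast+
  show "v \<in> {1..n}"
    using outside assms by (metis option.distinct(1))
  then show "u \<in> {1..n}"
    using inside assms by blast
qed

lemma strict_anc_in_range:
  assumes "(u, v) \<in> strict_anc par"
  shows "u \<in> {1..n}" and "v \<in> {1..n}"
proof -
  obtain w where "(u, w) \<in> parent_rel par"
    using assms unfolding strict_anc_def by (blast dest: tranclD)
  then show "u \<in> {1..n}"
    unfolding parent_rel_def by (blast intro: parent_in_range)
  obtain p where "(p, v) \<in> parent_rel par"
    using assms unfolding strict_anc_def by (blast dest: tranclD2)
  then show "v \<in> {1..n}"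
    unfolding parent_rel_def by (blast intro: parent_in_range)
qed

lemma finite_strict_ancs: "finite {u. (u, v) \<in> strict_anc par}"
  by (rule finite_subset[of _ "{1..n}"]) (auto dest: strict_anc_in_range)

lemma record_less:
  assumes "is_record par w" and "(u, w) \<in> strict_anc par"
  shows "w < u"
proof -
  have "\<not> u < w" and "u \<noteq> w"
    using assms strict_anc_irrefl by (auto simp: is_record_def)
  then show ?thesis
    by simp
qed

lemma not_record: "(u, v) \<in> strict_anc par \<Longrightarrow> u < v \<Longrightarrow> \<not> is_record par v"
  by (auto simp: is_record_def)

lemma not_record_in_range: "\<not> is_record par v \<Longrightarrow> v \<in> {1..n}"
  by (auto simp: is_record_def dest: strict_anc_in_range)

lemma record_strict_anc_of_less:
  assumes "is_record par m" and "(m, w) \<in> strict_anc par" and "(u, w) \<in> strict_anc par"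
    and "u < m"
  shows "(m, u) \<in> strict_anc par"
  using strict_anc_linear[OF assms(2,3)] record_less[OF assms(1)] \<open>u < m\<close>
  by (metis less_asym)

lemma min_anc_le: "(u, v) \<in> strict_anc par \<Longrightarrow> min_anc par v \<le> u"
  unfolding min_anc_def using finite_strict_ancs by simp

lemma min_anc_strict_anc:
  assumes "(u, v) \<in> strict_anc par"
  shows "(min_anc par v, v) \<in> strict_anc par"
  using Min_in[OF finite_strict_ancs, of v] assms by (auto simp: min_anc_def)

lemma not_record_strict_anc: "\<not> is_record par v \<Longrightarrow> (min_anc par v, v) \<in> strict_anc par"
  by (auto simp: is_record_def intro: min_anc_strict_anc)

lemma min_anc_less: "\<not> is_record par v \<Longrightarrow> min_anc par v < v"
  by (auto simp: is_record_def dest: min_anc_le)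

lemma is_record_min_anc:
  assumes "(u, v) \<in> strict_anc par"
  shows "is_record par (min_anc par v)"
  using min_anc_le[OF strict_anc_trans[OF _ min_anc_strict_anc[OF assms]]]
  by (force simp: is_record_def)

lemma finite_records_below: "finite {m. is_record par m \<and> (m, v) \<in> strict_anc par \<and> m < v}"
  by (rule finite_subset[OF _ finite_strict_ancs[of v]]) auto

lemma max_record_below:
  assumes "\<not> is_record par v"
  shows "is_record par (max_record_below par v)"
    and "(max_record_below par v, v) \<in> strict_anc par"
    and "max_record_below par v < v"
proof -
  have "min_anc par v \<in> {m. is_record par m \<and> (m, v) \<in> strict_anc par \<and> m < v}"
    using assms is_record_min_anc not_record_strict_anc min_anc_less by blast
  then have "max_record_below par v \<in> {m. is_record par m \<and> (m, v) \<in> strict_anc par \<and> m < v}"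
    unfolding max_record_below_def using finite_records_below by (intro Max_in) blast+
  then show "is_record par (max_record_below par v)"
    and "(max_record_below par v, v) \<in> strict_anc par"
    and "max_record_below par v < v"
    by simp_all
qed

lemma le_max_record_below:
  "is_record par m \<Longrightarrow> (m, v) \<in> strict_anc par \<Longrightarrow> m < v \<Longrightarrow> m \<le> max_record_below par v"
  unfolding max_record_below_def using finite_records_below by simp

lemma min_anc_le_max_record_below:
  "\<not> is_record par v \<Longrightarrow> min_anc par v \<le> max_record_below par v"
  using is_record_min_anc not_record_strict_anc min_anc_less le_max_record_below by blast

lemma less_record_above_max_record_below:
  assumes x: "\<not> is_record par x" and m: "is_record par m"
    and above: "(m, max_record_below par x) \<in> strict_anc par"
  shows "x < m"
proof -
  have mx: "(m, x) \<in> strict_anc par"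
    using strict_anc_trans[OF above max_record_below(2)[OF x]] .
  have "max_record_below par x < m"
    using record_less[OF max_record_below(1)[OF x] above] .
  then have "\<not> m < x"
    using le_max_record_below[OF m mx] by linarith
  moreover have "m \<noteq> x"
    using mx strict_anc_irrefl by blast
  ultimately show ?thesis
    by simp
qed

end

section \<open>Reversing the order inside classes of non-records\<close>

definition key_class :: "(nat \<Rightarrow> nat option) \<Rightarrow> (nat \<Rightarrow> nat) \<Rightarrow> nat \<Rightarrow> nat set" where
  "key_class par c v = {w. \<not> is_record par w \<and> c w = c v}"

definition class_rev :: "(nat \<Rightarrow> nat option) \<Rightarrow> (nat \<Rightarrow> nat) \<Rightarrow> nat \<Rightarrow> nat" where
  "class_rev par c v = (if is_record par v then v else rev_order (key_class par c v) v)"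

definition flip_classes ::
    "((nat \<Rightarrow> nat option) \<Rightarrow> nat \<Rightarrow> nat) \<Rightarrow> (nat \<Rightarrow> nat option) \<Rightarrow> nat \<Rightarrow> nat option" where
  "flip_classes key par = relabel (class_rev par (key par)) par"

definition admissible_key :: "(nat \<Rightarrow> nat option) \<Rightarrow> (nat \<Rightarrow> nat) \<Rightarrow> bool" where
  "admissible_key par c \<longleftrightarrow> (\<forall>x. \<not> is_record par x \<longrightarrow>
     (c x, x) \<in> strict_anc par \<and> c x < x \<and> min_anc par x \<le> c x)"

context labelled_forest
begin

lemma admissible_key_min_anc: "admissible_key par (min_anc par)"
  unfolding admissible_key_def using not_record_strict_anc min_anc_less by blast

lemma admissible_key_max_record_below: "admissible_key par (max_record_below par)"
  unfolding admissible_key_def using max_record_below min_anc_le_max_record_below by blast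

lemma finite_key_class: "finite (key_class par c v)"
  by (rule finite_subset[of _ "{1..n}"]) (auto simp: key_class_def dest: not_record_in_range)

lemma mem_key_class: "\<not> is_record par v \<Longrightarrow> v \<in> key_class par c v"
  by (simp add: key_class_def)

lemma key_class_cong: "c w = c v \<Longrightarrow> key_class par c w = key_class par c v"
  by (simp add: key_class_def)

lemma class_rev_record: "is_record par v \<Longrightarrow> class_rev par c v = v"
  by (simp add: class_rev_def)

lemma class_rev_in_key_class:
  assumes "\<not> is_record par v"
  shows "class_rev par c v \<in> key_class par c v"
  using rev_order_in[OF finite_key_class mem_key_class[OF assms]] assms
  by (simp add: class_rev_def)

lemma not_record_class_rev: "\<not> is_record par v \<Longrightarrow> \<not> is_record par (class_rev par c v)"
  using class_rev_in_key_class by (simp add: key_class_def)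

lemma key_class_rev: "\<not> is_record par v \<Longrightarrow> c (class_rev par c v) = c v"
  using class_rev_in_key_class by (simp add: key_class_def)

lemma class_rev_class_rev: "class_rev par c (class_rev par c v) = v"
proof (cases "is_record par v")
  case False
  have "key_class par c (class_rev par c v) = key_class par c v"
    using key_class_cong key_class_rev[OF False] by blast
  then show ?thesis
    using False not_record_class_rev[OF False]
      rev_order_rev_order[OF finite_key_class mem_key_class[OF False]]
    by (simp add: class_rev_def)
qed (simp add: class_rev_def)

lemma class_rev_strict_antimono:
  assumes "\<not> is_record par v" and "\<not> is_record par w" and "c v = c w" and "v < w"
  shows "class_rev par c w < class_rev par c v"
proof -
  have "w \<in> key_class par c v"
    using assms by (simp add: key_class_def)
  then have "rev_order (key_class par c v) w < rev_order (key_class par c v) v"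
    using rev_order_strict_antimono[OF finite_key_class mem_key_class] assms by blast
  then show ?thesis
    using assms key_class_cong[of c w v] by (simp add: class_rev_def)
qed

lemma class_rev_less_iff:
  assumes "\<not> is_record par v" and "\<not> is_record par w" and "c v = c w"
  shows "class_rev par c v < class_rev par c w \<longleftrightarrow> w < v"
  using class_rev_strict_antimono[of v w c] class_rev_strict_antimono[of w v c] assms
  by (cases v w rule: linorder_cases) auto

lemma class_rev_in_range: "class_rev par c v \<in> {1..n} \<longleftrightarrow> v \<in> {1..n}"
  using not_record_in_range not_record_class_rev
  by (cases "is_record par v") (auto simp: class_rev_def)

lemma key_less_class_rev:
  assumes c: "admissible_key par c" and v: "\<not> is_record par v"
  shows "c v < class_rev par c v"
  using c not_record_class_rev[OF v] key_class_rev[OF v]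
  unfolding admissible_key_def by metis

lemma record_less_class_rev:
  assumes c: "admissible_key par c" and w: "is_record par w" and uw: "(u, w) \<in> strict_anc par"
  shows "w < class_rev par c u"
proof (cases "is_record par u")
  case False
  have "(c u, u) \<in> strict_anc par"
    using c False unfolding admissible_key_def by blast
  then have "w < c u"
    using record_less[OF w strict_anc_trans[OF _ uw]] by blast
  then show ?thesis
    using key_less_class_rev[OF c False] by simp
qed (simp add: class_rev_record record_less[OF w uw])

lemma labelled_forest_relabel_class_rev: "labelled_forest n (relabel (class_rev par c) par)"
  unfolding labelled_forest_def
  by (rule is_forest_relabel[OF forest class_rev_class_rev class_rev_in_range])

lemma strict_anc_relabel_class_rev:
  "(x, y) \<in> strict_anc (relabel (class_rev par c) par) \<longleftrightarrow>
     (class_rev par c x, class_rev par c y) \<in> strict_anc par"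
  by (rule strict_anc_relabel[OF class_rev_class_rev])

lemma is_record_relabel_class_rev:
  assumes c: "admissible_key par c"
  shows "is_record (relabel (class_rev par c) par) v \<longleftrightarrow> is_record par v"
proof -
  let ?p = "class_rev par c"
  have "\<not> is_record (relabel ?p par) v \<longleftrightarrow> (\<exists>u. (?p u, ?p v) \<in> strict_anc par \<and> u < v)"
    by (simp add: is_record_def strict_anc_relabel_class_rev)
  also have "\<dots> \<longleftrightarrow> \<not> is_record par v"
  proof
    assume "\<exists>u. (?p u, ?p v) \<in> strict_anc par \<and> u < v"
    then obtain u where u: "(?p u, ?p v) \<in> strict_anc par" "u < v"
      by blast
    show "\<not> is_record par v"
    proof
      assume v: "is_record par v"
      then have "v < ?p (?p u)"
        using record_less_class_rev[OF c v] u(1) class_rev_record[OF v] by simp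
      then show False
        using u(2) by (simp add: class_rev_class_rev)
    qed
  next
    assume v: "\<not> is_record par v"
    let ?w = "?p v"
    have w: "\<not> is_record par ?w"
      using not_record_class_rev[OF v] .
    have "min_anc par ?w \<le> c ?w"
      using c w unfolding admissible_key_def by blast
    also have "\<dots> < ?p ?w"
      using key_less_class_rev[OF c w] .
    finally have "min_anc par ?w < v"
      by (simp add: class_rev_class_rev)
    moreover have "?p (min_anc par ?w) = min_anc par ?w"
      using class_rev_record is_record_min_anc not_record_strict_anc[OF w] by blast
    ultimately show "\<exists>u. (?p u, ?p v) \<in> strict_anc par \<and> u < v"
      using not_record_strict_anc[OF w] by metis
  qed
  finally show ?thesis
    by simp
qed

lemma class_rev_relabel_class_rev:
  assumes c: "admissible_key par c" and c': "\<And>x. \<not> is_record par x \<Longrightarrow> c' x = c x"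
  shows "class_rev (relabel (class_rev par c) par) c' = class_rev par c"
proof
  fix x
  let ?G = "relabel (class_rev par c) par"
  have record_iff: "\<And>y. is_record ?G y \<longleftrightarrow> is_record par y"
    using is_record_relabel_class_rev[OF c] .
  then have "key_class ?G c' x = key_class par c x" if "\<not> is_record par x"
    using c' that by (auto simp: key_class_def)
  then show "class_rev ?G c' x = class_rev par c x"
    by (simp add: class_rev_def record_iff)
qed

lemma min_anc_relabel_class_rev:
  assumes v: "\<not> is_record par v"
  shows "min_anc (relabel (class_rev par (min_anc par)) par) v = min_anc par v"
proof -
  let ?p = "class_rev par (min_anc par)"
  let ?A = "{u. (?p u, ?p v) \<in> strict_anc par}"
  let ?m = "min_anc par (?p v)"
  have w: "\<not> is_record par (?p v)"
    using not_record_class_rev[OF v] .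
  have m_anc: "(?m, ?p v) \<in> strict_anc par"
    using not_record_strict_anc[OF w] .
  have "?m \<in> ?A"
    using m_anc class_rev_record[OF is_record_min_anc[OF m_anc]] by simp
  moreover have "?m \<le> u" if u: "u \<in> ?A" for u
  proof (cases "is_record par (?p u)")
    case False
    have "?m \<le> min_anc par (?p u)"
      using min_anc_le strict_anc_trans[OF not_record_strict_anc[OF False]] u by blast
    also have "\<dots> < u"
      using key_less_class_rev[OF admissible_key_min_anc False] by (simp add: class_rev_class_rev)
    finally show ?thesis
      by simp
  next
    case True
    then have "?p u = u"
      using class_rev_record class_rev_class_rev by metis
    then show ?thesis
      using min_anc_le u by simp
  qed
  moreover have "finite ?A"
    using labelled_forest.finite_strict_ancs[OF labelled_forest_relabel_class_rev]
    by (simp add: strict_anc_relabel_class_rev)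
  ultimately have "Min ?A = ?m"
    by (intro Min_eqI) auto
  then show ?thesis
    by (simp add: min_anc_def strict_anc_relabel_class_rev key_class_rev[OF v])
qed

text \<open>A record ancestor of \<open>w\<close> is either at most \<open>max_record_below par w\<close>, which \<open>w\<close> and
  its image both exceed, or an ancestor of that record, which both lie below.\<close>
lemma record_less_class_rev_iff:
  assumes m: "is_record par m" and mw: "(m, w) \<in> strict_anc par" and w: "\<not> is_record par w"
  shows "m < class_rev par (max_record_below par) w \<longleftrightarrow> m < w"
proof -
  let ?p = "class_rev par (max_record_below par)"
  let ?l = "max_record_below par w"
  have w': "\<not> is_record par (?p w)"
    using not_record_class_rev[OF w] .
  have l': "max_record_below par (?p w) = ?l"
    using key_class_rev[OF w] .
  have "?l < w" and "?l < ?p w"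
    using max_record_below(3)[OF w] max_record_below(3)[OF w'] l' by simp_all
  moreover have "?l < m \<Longrightarrow> w < m \<and> ?p w < m"
  proof -
    assume "?l < m"
    then have "(m, ?l) \<in> strict_anc par"
      using record_strict_anc_of_less[OF m mw max_record_below(2)[OF w]] by blast
    then show "w < m \<and> ?p w < m"
      using less_record_above_max_record_below[OF _ m] w w' l' by simp
  qed
  ultimately show ?thesis
    by (cases "?l < m") auto
qed

lemma max_record_below_relabel_class_rev:
  assumes v: "\<not> is_record par v"
  shows "max_record_below (relabel (class_rev par (max_record_below par)) par) v =
    max_record_below par v"
proof -
  let ?p = "class_rev par (max_record_below par)"
  let ?G = "relabel ?p par"
  let ?w = "?p v"
  have w: "\<not> is_record par ?w"
    using not_record_class_rev[OF v] .
  have record_iff: "\<And>y. is_record ?G y \<longleftrightarrow> is_record par y"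
    using is_record_relabel_class_rev[OF admissible_key_max_record_below] .
  have "{m. is_record ?G m \<and> (m, v) \<in> strict_anc ?G \<and> m < v} =
      {m. is_record par m \<and> (m, ?w) \<in> strict_anc par \<and> m < ?w}"
  proof -
    have "m < v \<longleftrightarrow> m < ?w" if "is_record par m" and "(m, ?w) \<in> strict_anc par" for m
      using record_less_class_rev_iff[OF that w] by (simp add: class_rev_class_rev)
    then show ?thesis
      by (auto simp: record_iff strict_anc_relabel_class_rev class_rev_record)
  qed
  then have "max_record_below ?G v = max_record_below par ?w"
    by (simp add: max_record_below_def)
  then show ?thesis
    using key_class_rev[OF v] by simp
qed

lemma labelled_forest_flip_classes: "labelled_forest n (flip_classes key par)"
  unfolding flip_classes_def by (rule labelled_forest_relabel_class_rev)

lemma strict_anc_flip_classes_image: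
  "(class_rev par (key par) x, class_rev par (key par) y) \<in> strict_anc (flip_classes key par) \<longleftrightarrow>
    (x, y) \<in> strict_anc par"
  by (simp add: flip_classes_def strict_anc_relabel_class_rev class_rev_class_rev)

lemma flip_classes_flip_classes:
  assumes key: "admissible_key par (key par)"
    and key_flip: "\<And>x. \<not> is_record par x \<Longrightarrow> key (flip_classes key par) x = key par x"
  shows "flip_classes key (flip_classes key par) = par"
proof -
  have "class_rev (flip_classes key par) (key (flip_classes key par)) = class_rev par (key par)"
    using class_rev_relabel_class_rev[OF key key_flip] by (simp add: flip_classes_def)
  then show ?thesis
    by (simp add: flip_classes_def relabel_relabel class_rev_class_rev)
qed

lemma flip_classes_min_anc_involution: "flip_classes min_anc (flip_classes min_anc par) = par"
  using flip_classes_flip_classes[where key = min_anc, OF admissible_key_min_anc]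
    min_anc_relabel_class_rev
  by (simp add: flip_classes_def)

lemma flip_classes_max_record_below_involution:
  "flip_classes max_record_below (flip_classes max_record_below par) = par"
  using flip_classes_flip_classes[where key = max_record_below, OF admissible_key_max_record_below]
    max_record_below_relabel_class_rev
  by (simp add: flip_classes_def)

end

section \<open>Patterns\<close>

definition contains :: "(nat \<Rightarrow> nat option) \<Rightarrow> nat list \<Rightarrow> bool" where
  "contains par pat \<longleftrightarrow> (\<exists>vs. is_instance par pat vs)"

lemma avoids_pair: "avoids par {p, q} \<longleftrightarrow> \<not> contains par p \<and> \<not> contains par q"
  by (simp add: avoids_def contains_def)

lemma contains_length_3:
  "contains par [x, y, z] \<longleftrightarrow> (\<exists>a b c. is_instance par [x, y, z] [a, b, c])"
  unfolding contains_def
proof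
  assume "\<exists>vs. is_instance par [x, y, z] vs"
  then obtain vs where vs: "is_instance par [x, y, z] vs"
    by blast
  then have "length vs = 3"
    by (simp add: is_instance_def)
  then obtain a b c where "vs = [a, b, c]"
    by (auto simp: numeral_eq_Suc length_Suc_conv)
  with vs show "\<exists>a b c. is_instance par [x, y, z] [a, b, c]"
    by blast
qed blast

lemma contains_length_4:
  "contains par [x, y, z, t] \<longleftrightarrow> (\<exists>a b c d. is_instance par [x, y, z, t] [a, b, c, d])"
  unfolding contains_def
proof
  assume "\<exists>vs. is_instance par [x, y, z, t] vs"
  then obtain vs where vs: "is_instance par [x, y, z, t] vs"
    by blast
  then have "length vs = 4"
    by (simp add: is_instance_def)
  then obtain a b c d where "vs = [a, b, c, d]"
    by (auto simp: numeral_eq_Suc length_Suc_conv)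
  with vs show "\<exists>a b c d. is_instance par [x, y, z, t] [a, b, c, d]"
    by blast
qed blast

lemma is_instance_length_3:
  "is_instance par [x, y, z] [a, b, c] \<longleftrightarrow>
    (a, b) \<in> strict_anc par \<and> (b, c) \<in> strict_anc par \<and>
    (a < b \<longleftrightarrow> x < y) \<and> (a < c \<longleftrightarrow> x < z) \<and> (b < a \<longleftrightarrow> y < x) \<and> (b < c \<longleftrightarrow> y < z) \<and>
    (c < a \<longleftrightarrow> z < x) \<and> (c < b \<longleftrightarrow> z < y)"
  unfolding is_instance_def by (simp add: numeral_eq_Suc All_less_Suc2 all_conj_distrib)

lemma is_instance_length_4:
  "is_instance par [x, y, z, t] [a, b, c, d] \<longleftrightarrow>
    (a, b) \<in> strict_anc par \<and> (b, c) \<in> strict_anc par \<and> (c, d) \<in> strict_anc par \<and>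
    (a < b \<longleftrightarrow> x < y) \<and> (a < c \<longleftrightarrow> x < z) \<and> (a < d \<longleftrightarrow> x < t) \<and> (b < a \<longleftrightarrow> y < x) \<and>
    (b < c \<longleftrightarrow> y < z) \<and> (b < d \<longleftrightarrow> y < t) \<and> (c < a \<longleftrightarrow> z < x) \<and> (c < b \<longleftrightarrow> z < y) \<and>
    (c < d \<longleftrightarrow> z < t) \<and> (d < a \<longleftrightarrow> t < x) \<and> (d < b \<longleftrightarrow> t < y) \<and> (d < c \<longleftrightarrow> t < z)"
  unfolding is_instance_def by (simp add: numeral_eq_Suc All_less_Suc2 all_conj_distrib)

lemma contains_123_iff:
  "contains par [1, 2, 3] \<longleftrightarrow>
    (\<exists>a b c. (a, b) \<in> strict_anc par \<and> (b, c) \<in> strict_anc par \<and> a < b \<and> b < c)"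
  unfolding contains_length_3 is_instance_length_3 by (intro iff_exI) auto

lemma contains_132_iff:
  "contains par [1, 3, 2] \<longleftrightarrow>
    (\<exists>a b c. (a, b) \<in> strict_anc par \<and> (b, c) \<in> strict_anc par \<and> a < c \<and> c < b)"
  unfolding contains_length_3 is_instance_length_3 by (intro iff_exI) auto

lemma contains_2413_iff:
  "contains par [2, 4, 1, 3] \<longleftrightarrow> (\<exists>a b c d. (a, b) \<in> strict_anc par \<and>
    (b, c) \<in> strict_anc par \<and> (c, d) \<in> strict_anc par \<and> c < a \<and> a < d \<and> d < b)"
  unfolding contains_length_4 is_instance_length_4 by (intro iff_exI) auto

lemma contains_2314_iff:
  "contains par [2, 3, 1, 4] \<longleftrightarrow> (\<exists>a b c d. (a, b) \<in> strict_anc par \<and>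
    (b, c) \<in> strict_anc par \<and> (c, d) \<in> strict_anc par \<and> c < a \<and> a < b \<and> b < d)"
  unfolding contains_length_4 is_instance_length_4 by (intro iff_exI) auto

lemma contains_3142_iff:
  "contains par [3, 1, 4, 2] \<longleftrightarrow> (\<exists>a b c d. (a, b) \<in> strict_anc par \<and>
    (b, c) \<in> strict_anc par \<and> (c, d) \<in> strict_anc par \<and> b < d \<and> d < a \<and> a < c)"
  unfolding contains_length_4 is_instance_length_4 by (intro iff_exI) auto

lemma contains_3124_iff:
  "contains par [3, 1, 2, 4] \<longleftrightarrow> (\<exists>a b c d. (a, b) \<in> strict_anc par \<and>
    (b, c) \<in> strict_anc par \<and> (c, d) \<in> strict_anc par \<and> b < c \<and> c < a \<and> a < d)"
  unfolding contains_length_4 is_instance_length_4 by (intro iff_exI) auto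

lemma num_avoiding_eq_by_involution:
  assumes forest: "\<And>par. labelled_forest n par \<Longrightarrow> labelled_forest n (\<Phi> par)"
    and involution: "\<And>par. labelled_forest n par \<Longrightarrow> \<Phi> (\<Phi> par) = par"
    and ST: "\<And>par. labelled_forest n par \<Longrightarrow> avoids par S \<Longrightarrow> avoids (\<Phi> par) T"
    and TS: "\<And>par. labelled_forest n par \<Longrightarrow> avoids par T \<Longrightarrow> avoids (\<Phi> par) S"
  shows "num_avoiding n S = num_avoiding n T"
proof -
  have "bij_betw \<Phi> {par. is_forest n par \<and> avoids par S} {par. is_forest n par \<and> avoids par T}"
    by (rule bij_betw_byWitness[where f' = \<Phi>]) (use assms in \<open>auto simp: labelled_forest_def\<close>)
  then show ?thesis
    unfolding num_avoiding_def by (rule bij_betw_same_card)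
qed

section \<open>Classes by minimum ancestor: \<open>{123, 2413}\<close> and \<open>{132, 2314}\<close>\<close>

definition ordered_min_classes :: "(nat \<Rightarrow> nat option) \<Rightarrow> bool \<Rightarrow> bool" where
  "ordered_min_classes par asc \<longleftrightarrow> (\<forall>v w. \<not> is_record par v \<longrightarrow> \<not> is_record par w \<longrightarrow>
     (v, w) \<in> strict_anc par \<longrightarrow> min_anc par v = min_anc par w \<longrightarrow> (v < w \<longleftrightarrow> asc))"

definition min_drops_below :: "(nat \<Rightarrow> nat option) \<Rightarrow> bool" where
  "min_drops_below par \<longleftrightarrow> (\<forall>v w. \<not> is_record par v \<longrightarrow> \<not> is_record par w \<longrightarrow>
     (v, w) \<in> strict_anc par \<longrightarrow> min_anc par v \<noteq> min_anc par w \<longrightarrow> w < min_anc par v)"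

context labelled_forest
begin

lemma min_anc_change:
  assumes v: "\<not> is_record par v" and w: "\<not> is_record par w" and vw: "(v, w) \<in> strict_anc par"
    and ne: "min_anc par v \<noteq> min_anc par w"
  shows "(v, min_anc par w) \<in> strict_anc par" and "min_anc par w < min_anc par v"
proof -
  have mw: "(min_anc par w, w) \<in> strict_anc par"
    using not_record_strict_anc[OF w] .
  have "min_anc par w \<le> min_anc par v"
    using min_anc_le[OF strict_anc_trans[OF not_record_strict_anc[OF v] vw]] .
  then show lt: "min_anc par w < min_anc par v"
    using ne by simp
  have "(min_anc par w, v) \<notin> strict_anc par"
    using lt min_anc_le by fastforce
  moreover have "min_anc par w \<noteq> v"
    using is_record_min_anc[OF mw] v by blast
  ultimately show "(v, min_anc par w) \<in> strict_anc par"
    using strict_anc_linear[OF mw vw] by blast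
qed

lemma min_anc_constant_between:
  assumes b: "\<not> is_record par b" and bc: "(b, c) \<in> strict_anc par"
    and cd: "(c, d) \<in> strict_anc par" and eq: "min_anc par b = min_anc par d"
  shows "\<not> is_record par c" and "min_anc par c = min_anc par b"
proof -
  have mc: "(min_anc par b, c) \<in> strict_anc par"
    using strict_anc_trans[OF not_record_strict_anc[OF b] bc] .
  have "min_anc par b \<le> c"
    using min_anc_le[OF cd] eq by simp
  moreover have "c \<noteq> min_anc par b"
    using mc strict_anc_irrefl by blast
  ultimately show c: "\<not> is_record par c"
    using not_record[OF mc] by simp
  have "min_anc par c \<le> min_anc par b"
    using min_anc_le[OF mc] .
  moreover have "min_anc par d \<le> min_anc par c"
    using min_anc_le[OF strict_anc_trans[OF not_record_strict_anc[OF c] cd]] .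
  ultimately show "min_anc par c = min_anc par b"
    using eq by simp
qed

lemma ordered_min_classes_if_not_contains_123:
  assumes "\<not> contains par [1, 2, 3]"
  shows "ordered_min_classes par False"
  unfolding ordered_min_classes_def
proof (intro allI impI)
  fix v w
  assume v: "\<not> is_record par v" and vw: "(v, w) \<in> strict_anc par"
  show "v < w \<longleftrightarrow> False"
    using assms not_record_strict_anc[OF v] min_anc_less[OF v] vw
    unfolding contains_123_iff by blast
qed

lemma ordered_min_classes_if_not_contains_132:
  assumes "\<not> contains par [1, 3, 2]"
  shows "ordered_min_classes par True"
  unfolding ordered_min_classes_def
proof (intro allI impI)
  fix v w
  assume v: "\<not> is_record par v" and w: "\<not> is_record par w" and vw: "(v, w) \<in> strict_anc par"
    and eq: "min_anc par v = min_anc par w"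
  have "min_anc par v < w"
    using min_anc_less[OF w] eq by simp
  then have "\<not> w < v"
    using assms not_record_strict_anc[OF v] vw unfolding contains_132_iff by blast
  then show "v < w \<longleftrightarrow> True"
    using vw strict_anc_irrefl by (cases "v = w") auto
qed

text \<open>If the minimum changes between \<open>v\<close> and \<open>w\<close> but \<open>w\<close> exceeds the old minimum, then
  the old minimum, \<open>v\<close>, the new minimum and \<open>w\<close> form a \<open>2413\<close> or a \<open>2314\<close>, according
  to the order of \<open>v\<close> and \<open>w\<close>; the other order gives a \<open>123\<close> resp. \<open>132\<close>.\<close>
lemma contains_if_above_old_min:
  assumes v: "\<not> is_record par v" and w: "\<not> is_record par w" and vw: "(v, w) \<in> strict_anc par"
    and ne: "min_anc par v \<noteq> min_anc par w" and above: "min_anc par v < w"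
  shows "contains par [1, 2, 3] \<or> contains par [2, 4, 1, 3]"
    and "contains par [1, 3, 2] \<or> contains par [2, 3, 1, 4]"
proof -
  have mv: "(min_anc par v, v) \<in> strict_anc par"
    using not_record_strict_anc[OF v] .
  have "v \<noteq> w"
    using vw strict_anc_irrefl by blast
  show "contains par [1, 2, 3] \<or> contains par [2, 4, 1, 3]"
  proof (cases "v < w")
    case True
    then show ?thesis
      using mv vw min_anc_less[OF v] unfolding contains_123_iff by blast
  next
    case False
    then have "w < v"
      using \<open>v \<noteq> w\<close> by simp
    then show ?thesis
      using mv min_anc_change[OF v w vw ne] not_record_strict_anc[OF w] above
      unfolding contains_2413_iff by blast
  qed
  show "contains par [1, 3, 2] \<or> contains par [2, 3, 1, 4]"
  proof (cases "v < w")
    case True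
    then show ?thesis
      using mv min_anc_change[OF v w vw ne] not_record_strict_anc[OF w] min_anc_less[OF v]
      unfolding contains_2314_iff by blast
  next
    case False
    then have "w < v"
      using \<open>v \<noteq> w\<close> by simp
    then show ?thesis
      using mv vw above unfolding contains_132_iff by blast
  qed
qed

lemma min_drops_below_if_avoids_123_2413:
  assumes "avoids par {[1, 2, 3], [2, 4, 1, 3]}"
  shows "min_drops_below par"
  unfolding min_drops_below_def
proof (intro allI impI)
  fix v w
  assume v: "\<not> is_record par v" and w: "\<not> is_record par w" and vw: "(v, w) \<in> strict_anc par"
    and ne: "min_anc par v \<noteq> min_anc par w"
  have "w \<noteq> min_anc par v"
    using strict_anc_trans[OF not_record_strict_anc[OF v] vw] strict_anc_irrefl by auto
  then show "w < min_anc par v"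
    using contains_if_above_old_min(1)[OF v w vw ne] assms
    unfolding avoids_pair by (meson linorder_neqE_nat)
qed

lemma min_drops_below_if_avoids_132_2314:
  assumes "avoids par {[1, 3, 2], [2, 3, 1, 4]}"
  shows "min_drops_below par"
  unfolding min_drops_below_def
proof (intro allI impI)
  fix v w
  assume v: "\<not> is_record par v" and w: "\<not> is_record par w" and vw: "(v, w) \<in> strict_anc par"
    and ne: "min_anc par v \<noteq> min_anc par w"
  have "w \<noteq> min_anc par v"
    using strict_anc_trans[OF not_record_strict_anc[OF v] vw] strict_anc_irrefl by auto
  then show "w < min_anc par v"
    using contains_if_above_old_min(2)[OF v w vw ne] assms
    unfolding avoids_pair by (meson linorder_neqE_nat)
qed

lemma min_anc_eq_if_min_drops_below:
  assumes drops: "min_drops_below par" and ab: "(a, b) \<in> strict_anc par"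
    and bd: "(b, d) \<in> strict_anc par" and "a < b" and "a < d"
  shows "min_anc par b = min_anc par d"
proof (rule ccontr)
  assume "min_anc par b \<noteq> min_anc par d"
  then have "d < min_anc par b"
    using drops bd not_record[OF ab \<open>a < b\<close>] not_record[OF strict_anc_trans[OF ab bd] \<open>a < d\<close>]
    unfolding min_drops_below_def by blast
  then show False
    using min_anc_le[OF ab] \<open>a < d\<close> by simp
qed

lemma avoids_123_2413_if:
  assumes ordered: "ordered_min_classes par False" and drops: "min_drops_below par"
  shows "avoids par {[1, 2, 3], [2, 4, 1, 3]}"
proof -
  have "\<not> contains par [1, 2, 3]"
  proof
    assume "contains par [1, 2, 3]"
    then obtain a b c where ab: "(a, b) \<in> strict_anc par" and bc: "(b, c) \<in> strict_anc par"
      and "a < b" "b < c"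
      unfolding contains_123_iff by blast
    have "min_anc par b = min_anc par c"
      using min_anc_eq_if_min_drops_below[OF drops ab bc] \<open>a < b\<close> \<open>b < c\<close> by simp
    then have "\<not> b < c"
      using ordered bc not_record[OF ab \<open>a < b\<close>] not_record[OF strict_anc_trans[OF ab bc]]
        \<open>a < b\<close> \<open>b < c\<close>
      unfolding ordered_min_classes_def by auto
    then show False
      using \<open>b < c\<close> by simp
  qed
  moreover have "\<not> contains par [2, 4, 1, 3]"
  proof
    assume "contains par [2, 4, 1, 3]"
    then obtain a b c d where ab: "(a, b) \<in> strict_anc par" and bc: "(b, c) \<in> strict_anc par"
      and cd: "(c, d) \<in> strict_anc par" and "c < a" "a < d" "d < b"
      unfolding contains_2413_iff by blast
    have bd: "min_anc par b = min_anc par d"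
      using min_anc_eq_if_min_drops_below[OF drops ab strict_anc_trans[OF bc cd]]
        \<open>a < d\<close> \<open>d < b\<close> by simp
    then have "\<not> is_record par c" and "min_anc par c = min_anc par d"
      using min_anc_constant_between[OF not_record[OF ab] bc cd] \<open>a < d\<close> \<open>d < b\<close> by simp_all
    then have "\<not> c < d"
      using ordered cd not_record[OF strict_anc_trans[OF ab strict_anc_trans[OF bc cd]]] \<open>a < d\<close>
      unfolding ordered_min_classes_def by blast
    then show False
      using \<open>c < a\<close> \<open>a < d\<close> by simp
  qed
  ultimately show ?thesis
    by (simp add: avoids_pair)
qed

lemma avoids_123_2413_iff:
  "avoids par {[1, 2, 3], [2, 4, 1, 3]} \<longleftrightarrow> ordered_min_classes par False \<and> min_drops_below par"
  using ordered_min_classes_if_not_contains_123 min_drops_below_if_avoids_123_2413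
    avoids_123_2413_if
  by (auto simp: avoids_pair)

lemma avoids_132_2314_if:
  assumes ordered: "ordered_min_classes par True" and drops: "min_drops_below par"
  shows "avoids par {[1, 3, 2], [2, 3, 1, 4]}"
proof -
  have "\<not> contains par [1, 3, 2]"
  proof
    assume "contains par [1, 3, 2]"
    then obtain a b c where ab: "(a, b) \<in> strict_anc par" and bc: "(b, c) \<in> strict_anc par"
      and "a < c" "c < b"
      unfolding contains_132_iff by blast
    have "min_anc par b = min_anc par c"
      using min_anc_eq_if_min_drops_below[OF drops ab bc] \<open>a < c\<close> \<open>c < b\<close> by simp
    then have "b < c"
      using ordered bc not_record[OF ab] not_record[OF strict_anc_trans[OF ab bc]]
        \<open>a < c\<close> \<open>c < b\<close>
      unfolding ordered_min_classes_def by auto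
    then show False
      using \<open>c < b\<close> by simp
  qed
  moreover have "\<not> contains par [2, 3, 1, 4]"
  proof
    assume "contains par [2, 3, 1, 4]"
    then obtain a b c d where ab: "(a, b) \<in> strict_anc par" and bc: "(b, c) \<in> strict_anc par"
      and cd: "(c, d) \<in> strict_anc par" and "c < a" "a < b" "b < d"
      unfolding contains_2314_iff by blast
    have "min_anc par b = min_anc par d"
      using min_anc_eq_if_min_drops_below[OF drops ab strict_anc_trans[OF bc cd]]
        \<open>a < b\<close> \<open>b < d\<close> by simp
    then have "\<not> is_record par c" and "min_anc par c = min_anc par b"
      using min_anc_constant_between[OF not_record[OF ab \<open>a < b\<close>] bc cd] by simp_all
    then have "b < c"
      using ordered bc not_record[OF ab \<open>a < b\<close>]
      unfolding ordered_min_classes_def by metis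
    then show False
      using \<open>c < a\<close> \<open>a < b\<close> by simp
  qed
  ultimately show ?thesis
    by (simp add: avoids_pair)
qed

lemma avoids_132_2314_iff:
  "avoids par {[1, 3, 2], [2, 3, 1, 4]} \<longleftrightarrow> ordered_min_classes par True \<and> min_drops_below par"
  using ordered_min_classes_if_not_contains_132 min_drops_below_if_avoids_132_2314
    avoids_132_2314_if
  by (auto simp: avoids_pair)

lemma flip_classes_min_anc_simps:
  shows "is_record (flip_classes min_anc par) v \<longleftrightarrow> is_record par v"
    and "(x, y) \<in> strict_anc (flip_classes min_anc par) \<longleftrightarrow>
      (class_rev par (min_anc par) x, class_rev par (min_anc par) y) \<in> strict_anc par"
    and "\<not> is_record par v \<Longrightarrow> min_anc (flip_classes min_anc par) v = min_anc par v"
  unfolding flip_classes_def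
  using is_record_relabel_class_rev[OF admissible_key_min_anc] strict_anc_relabel_class_rev
    min_anc_relabel_class_rev
  by blast+

lemma ordered_min_classes_flip_classes:
  assumes ordered: "ordered_min_classes par asc"
  shows "ordered_min_classes (flip_classes min_anc par) (\<not> asc)"
  unfolding ordered_min_classes_def
proof (intro allI impI)
  let ?p = "class_rev par (min_anc par)"
  fix v w
  assume "\<not> is_record (flip_classes min_anc par) v" and "\<not> is_record (flip_classes min_anc par) w"
    and "(v, w) \<in> strict_anc (flip_classes min_anc par)"
    and "min_anc (flip_classes min_anc par) v = min_anc (flip_classes min_anc par) w"
  then have v: "\<not> is_record par v" and w: "\<not> is_record par w"
    and vw: "(?p v, ?p w) \<in> strict_anc par" and eq: "min_anc par v = min_anc par w"
    by (simp_all add: flip_classes_min_anc_simps)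
  have eq': "min_anc par (?p v) = min_anc par (?p w)"
    using eq key_class_rev[OF v, of "min_anc par"] key_class_rev[OF w, of "min_anc par"] by simp
  have "?p v < ?p w \<longleftrightarrow> asc"
    using ordered not_record_class_rev[OF v] not_record_class_rev[OF w] vw eq'
    unfolding ordered_min_classes_def by blast
  moreover have "?p v < ?p w \<longleftrightarrow> \<not> v < w"
    using class_rev_less_iff[OF v w eq] vw strict_anc_irrefl by (cases "v = w") auto
  ultimately show "v < w \<longleftrightarrow> \<not> asc"
    by blast
qed

lemma min_drops_below_flip_classes:
  assumes drops: "min_drops_below par"
  shows "min_drops_below (flip_classes min_anc par)"
  unfolding min_drops_below_def
proof (intro allI impI)
  let ?p = "class_rev par (min_anc par)"
  fix v w
  assume "\<not> is_record (flip_classes min_anc par) v" and "\<not> is_record (flip_classes min_anc par) w"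
    and "(v, w) \<in> strict_anc (flip_classes min_anc par)"
    and "min_anc (flip_classes min_anc par) v \<noteq> min_anc (flip_classes min_anc par) w"
  then have v: "\<not> is_record par v" and w: "\<not> is_record par w"
    and vw: "(?p v, ?p w) \<in> strict_anc par" and ne: "min_anc par v \<noteq> min_anc par w"
    by (simp_all add: flip_classes_min_anc_simps)
  have v': "\<not> is_record par (?p v)" and w': "\<not> is_record par (?p w)"
    using not_record_class_rev v w by blast+
  have key: "min_anc par (?p v) = min_anc par v" "min_anc par (?p w) = min_anc par w"
    using key_class_rev v w by blast+
  txt \<open>The common minimum of \<open>w\<close> and its image lies below the image of \<open>v\<close>, so \<open>w\<close> does too.\<close>
  have "(?p v, w) \<in> strict_anc par"
    using min_anc_change(1)[OF v' w' vw] ne key not_record_strict_anc[OF w] strict_anc_trans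
    by metis
  then have "w < min_anc par (?p v)"
    using drops v' w ne key unfolding min_drops_below_def by metis
  then show "w < min_anc (flip_classes min_anc par) v"
    using key flip_classes_min_anc_simps(3)[OF v] by simp
qed

lemma flip_classes_min_anc_avoids:
  shows "avoids par {[1, 2, 3], [2, 4, 1, 3]} \<Longrightarrow>
      avoids (flip_classes min_anc par) {[1, 3, 2], [2, 3, 1, 4]}"
    and "avoids par {[1, 3, 2], [2, 3, 1, 4]} \<Longrightarrow>
      avoids (flip_classes min_anc par) {[1, 2, 3], [2, 4, 1, 3]}"
proof -
  interpret flipped: labelled_forest n "flip_classes min_anc par"
    by (rule labelled_forest_flip_classes)
  show "avoids par {[1, 2, 3], [2, 4, 1, 3]} \<Longrightarrow>
      avoids (flip_classes min_anc par) {[1, 3, 2], [2, 3, 1, 4]}"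
    unfolding avoids_123_2413_iff flipped.avoids_132_2314_iff
    using ordered_min_classes_flip_classes[where asc = False] min_drops_below_flip_classes
    by simp
  show "avoids par {[1, 3, 2], [2, 3, 1, 4]} \<Longrightarrow>
      avoids (flip_classes min_anc par) {[1, 2, 3], [2, 4, 1, 3]}"
    unfolding avoids_132_2314_iff flipped.avoids_123_2413_iff
    using ordered_min_classes_flip_classes[where asc = True] min_drops_below_flip_classes
    by simp
qed

end

section \<open>Classes by largest record below: \<open>{123, 3142}\<close> and \<open>{132, 3124}\<close>\<close>

context labelled_forest
begin

lemma distinct_max_records_below:
  assumes u: "\<not> is_record par u" and v: "\<not> is_record par v" and uv: "(u, v) \<in> strict_anc par"
    and ne: "max_record_below par u \<noteq> max_record_below par v"
  defines "p \<equiv> class_rev par (max_record_below par)"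
  shows "v < max_record_below par u \<and> p v < max_record_below par u \<or>
    u < max_record_below par v \<and> p u < max_record_below par v"
proof -
  let ?a = "max_record_below par u" and ?b = "max_record_below par v"
  have "(?a, v) \<in> strict_anc par" and "(?b, v) \<in> strict_anc par"
    using strict_anc_trans[OF max_record_below(2)[OF u] uv] max_record_below(2)[OF v] .
  then have "(?a, ?b) \<in> strict_anc par \<or> (?b, ?a) \<in> strict_anc par"
    using strict_anc_linear ne by blast
  moreover have "v < ?a \<and> p v < ?a" if "(?a, ?b) \<in> strict_anc par"
    using less_record_above_max_record_below[OF v max_record_below(1)[OF u] that]
      less_record_above_max_record_below[OF not_record_class_rev[OF v, of "max_record_below par"]
        max_record_below(1)[OF u]]
      that key_class_rev[OF v, of "max_record_below par"]
    by (simp add: p_def)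
  moreover have "u < ?b \<and> p u < ?b" if "(?b, ?a) \<in> strict_anc par"
    using less_record_above_max_record_below[OF u max_record_below(1)[OF v] that]
      less_record_above_max_record_below[OF not_record_class_rev[OF u, of "max_record_below par"]
        max_record_below(1)[OF v]]
      that key_class_rev[OF u, of "max_record_below par"]
    by (simp add: p_def)
  ultimately show ?thesis
    by blast
qed

lemma class_rev_max_record_below_less_iff:
  assumes uv: "(u, v) \<in> strict_anc par"
  defines "p \<equiv> class_rev par (max_record_below par)"
  shows "p u < p v \<longleftrightarrow> (if \<not> is_record par u \<and> \<not> is_record par v \<and>
    max_record_below par u = max_record_below par v then v < u else u < v)"
proof (cases "is_record par u")
  case True
  then show ?thesis
    using record_less_class_rev_iff[OF True uv] class_rev_record[OF True]
      class_rev_record[of v] unfolding p_def by (cases "is_record par v") auto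
next
  case u: False
  show ?thesis
  proof (cases "is_record par v")
    case True
    then show ?thesis
      using record_less[OF True uv]
        record_less_class_rev[OF admissible_key_max_record_below True uv]
        class_rev_record[OF True] unfolding p_def by auto
  next
    case v: False
    have "max_record_below par u < u" "max_record_below par u < p u"
      "max_record_below par v < v" "max_record_below par v < p v"
      using max_record_below(3) u v not_record_class_rev key_class_rev unfolding p_def by metis+
    then show ?thesis
      using class_rev_less_iff[OF u v] distinct_max_records_below[OF u v uv] u v
      unfolding p_def by auto
  qed
qed

lemma flip_contains_132_or_3124_if_123:
  assumes ab: "(a, b) \<in> strict_anc par" and bc: "(b, c) \<in> strict_anc par"
    and "a < b" and "b < c"
  shows "contains (flip_classes max_record_below par) [1, 3, 2] \<or>
    contains (flip_classes max_record_below par) [3, 1, 2, 4]"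
proof -
  let ?p = "class_rev par (max_record_below par)"
  have b: "\<not> is_record par b" and c: "\<not> is_record par c"
    using not_record[OF ab] not_record[OF strict_anc_trans[OF ab bc]] \<open>a < b\<close> \<open>b < c\<close> by simp_all
  define h where "h = max_record_below par b"
  have h: "is_record par h" "(h, b) \<in> strict_anc par" "h < b" "?p h = h"
    using max_record_below[OF b] class_rev_record unfolding h_def by blast+
  have hc: "(h, c) \<in> strict_anc par"
    using strict_anc_trans[OF h(2) bc] .
  have h_less: "?p h < ?p b" "?p h < ?p c"
    using class_rev_max_record_below_less_iff[OF h(2)] class_rev_max_record_below_less_iff[OF hc]
      h \<open>b < c\<close> by simp_all
  show ?thesis
  proof (cases "h = max_record_below par c")
    case True
    then have "?p c < ?p b"
      using class_rev_less_iff[OF c b] \<open>b < c\<close> unfolding h_def by simp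
    then show ?thesis
      unfolding contains_132_iff using h(2) bc h_less
      by (intro disjI1 exI[of _ "?p h"] exI[of _ "?p b"] exI[of _ "?p c"])
        (simp add: strict_anc_flip_classes_image)
  next
    case False
    define x where "x = max_record_below par c"
    have x: "is_record par x" "(x, c) \<in> strict_anc par" "x < c" "?p x = x"
      using max_record_below[OF c] class_rev_record unfolding x_def by blast+
    have "b < x" and "?p b < ?p x"
      using distinct_max_records_below[OF b c bc] False h \<open>b < c\<close> x(4)
      unfolding h_def x_def by auto
    then have xh: "(x, h) \<in> strict_anc par"
      using record_strict_anc_of_less[OF x(1,2)] bc hc h(3) by simp_all
    have "?p x < ?p c"
      using class_rev_max_record_below_less_iff[OF x(2)] x by simp
    then show ?thesis
      unfolding contains_3124_iff using xh h(2) bc h_less \<open>?p b < ?p x\<close>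
      by (intro disjI2 exI[of _ "?p x"] exI[of _ "?p h"] exI[of _ "?p b"] exI[of _ "?p c"])
        (simp add: strict_anc_flip_classes_image)
  qed
qed

lemma flip_contains_132_if_3142:
  assumes no_123: "\<not> contains par [1, 2, 3]"
    and ab: "(a, b) \<in> strict_anc par" and bc: "(b, c) \<in> strict_anc par"
    and cd: "(c, d) \<in> strict_anc par" and "b < d" "d < a" "a < c"
  shows "contains (flip_classes max_record_below par) [1, 3, 2]"
proof -
  let ?p = "class_rev par (max_record_below par)"
  have ac: "(a, c) \<in> strict_anc par" and bd: "(b, d) \<in> strict_anc par"
    using strict_anc_trans ab bc cd by blast+
  have record_if_123_free: "is_record par x"
    if "(x, y) \<in> strict_anc par" and "x < y" for x y
    using no_123 max_record_below[of x] that unfolding contains_123_iff by blast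
  have a: "is_record par a" and b: "is_record par b"
    using record_if_123_free ac bd \<open>b < d\<close> \<open>d < a\<close> \<open>a < c\<close> by simp_all
  have c: "\<not> is_record par c" and d: "\<not> is_record par d"
    using not_record ac bd \<open>b < d\<close> \<open>d < a\<close> \<open>a < c\<close> by simp_all
  have "a \<le> max_record_below par c" and "max_record_below par d < a"
    using le_max_record_below[OF a ac] max_record_below(3)[OF d] \<open>d < a\<close> \<open>a < c\<close> by simp_all
  then have "\<not> ?p c < ?p d"
    using class_rev_max_record_below_less_iff[OF cd] \<open>d < a\<close> \<open>a < c\<close> by simp
  moreover have "?p c \<noteq> ?p d"
    using class_rev_class_rev \<open>d < a\<close> \<open>a < c\<close> by (metis less_asym)
  moreover have "?p b < ?p d"
    using class_rev_max_record_below_less_iff[OF bd] b \<open>b < d\<close> by simp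
  ultimately show ?thesis
    unfolding contains_132_iff using bc cd
    by (intro exI[of _ "?p b"] exI[of _ "?p c"] exI[of _ "?p d"])
      (simp add: strict_anc_flip_classes_image)
qed

lemma flip_contains_123_or_3142_if_132:
  assumes ab: "(a, b) \<in> strict_anc par" and bc: "(b, c) \<in> strict_anc par"
    and "a < c" and "c < b"
  shows "contains (flip_classes max_record_below par) [1, 2, 3] \<or>
    contains (flip_classes max_record_below par) [3, 1, 4, 2]"
proof -
  let ?p = "class_rev par (max_record_below par)"
  have b: "\<not> is_record par b" and c: "\<not> is_record par c"
    using not_record[OF ab] not_record[OF strict_anc_trans[OF ab bc]] \<open>a < c\<close> \<open>c < b\<close> by simp_all
  define x where "x = max_record_below par b"
  have x: "is_record par x" "(x, b) \<in> strict_anc par" "x < b" "?p x = x"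
    using max_record_below[OF b] class_rev_record unfolding x_def by blast+
  have x_less: "?p x < ?p b"
    using class_rev_max_record_below_less_iff[OF x(2)] x by simp
  show ?thesis
  proof (cases "x = max_record_below par c")
    case True
    then have "?p b < ?p c"
      using class_rev_less_iff[OF b c] \<open>c < b\<close> unfolding x_def by simp
    then show ?thesis
      unfolding contains_123_iff using x(2) bc x_less
      by (intro disjI1 exI[of _ "?p x"] exI[of _ "?p b"] exI[of _ "?p c"])
        (simp add: strict_anc_flip_classes_image)
  next
    case False
    define z where "z = min_anc par b"
    have z: "is_record par z" "(z, b) \<in> strict_anc par" "z < c" "?p z = z"
      using is_record_min_anc[OF ab] min_anc_strict_anc[OF ab] min_anc_le[OF ab] \<open>a < c\<close>
        class_rev_record unfolding z_def by force+
    have "c < x" and "?p c < ?p x"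
      using distinct_max_records_below[OF b c bc] False x \<open>c < b\<close>
        max_record_below(3)[OF c] unfolding x_def by auto
    then have xz: "(x, z) \<in> strict_anc par"
      using record_strict_anc_of_less[OF x(1,2) z(2)] z(3) by simp
    have "?p z < ?p c"
      using class_rev_max_record_below_less_iff[OF strict_anc_trans[OF z(2) bc]] z by simp
    then show ?thesis
      unfolding contains_3142_iff using xz z(2) bc x_less \<open>?p c < ?p x\<close>
      by (intro disjI2 exI[of _ "?p x"] exI[of _ "?p z"] exI[of _ "?p b"] exI[of _ "?p c"])
        (simp add: strict_anc_flip_classes_image)
  qed
qed

lemma distinct_max_records_below_if_no_132:
  assumes no_132: "\<not> contains par [1, 3, 2]"
    and ac: "(a, c) \<in> strict_anc par" and cd: "(c, d) \<in> strict_anc par"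
    and "c < a" and "a < d" and c: "\<not> is_record par c"
  shows "max_record_below par c \<noteq> max_record_below par d"
proof
  assume eq: "max_record_below par c = max_record_below par d"
  have ad: "(a, d) \<in> strict_anc par"
    using strict_anc_trans[OF ac cd] .
  have below_c: "max_record_below par d < c"
    using max_record_below(3)[OF c] eq by simp
  show False
  proof (cases "is_record par a")
    case True
    then show False
      using le_max_record_below[OF True ad] below_c \<open>c < a\<close> \<open>a < d\<close> by simp
  next
    case False
    define k where "k = max_record_below par a"
    have k: "is_record par k" "(k, a) \<in> strict_anc par" "k < a"
      using max_record_below[OF False] unfolding k_def by blast+
    have "\<not> k < c"
      using no_132 k(2) ac \<open>c < a\<close> unfolding contains_132_iff by blast
    moreover have "k \<le> max_record_below par d"
      using le_max_record_below[OF k(1) strict_anc_trans[OF k(2) ad]] k(3) \<open>a < d\<close> by simp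
    ultimately show False
      using below_c by simp
  qed
qed

lemma flip_contains_123_if_3124:
  assumes no_132: "\<not> contains par [1, 3, 2]"
    and ab: "(a, b) \<in> strict_anc par" and bc: "(b, c) \<in> strict_anc par"
    and cd: "(c, d) \<in> strict_anc par" and "b < c" "c < a" "a < d"
  shows "contains (flip_classes max_record_below par) [1, 2, 3]"
proof -
  let ?p = "class_rev par (max_record_below par)"
  have c: "\<not> is_record par c"
    using not_record[OF bc] \<open>b < c\<close> .
  have "max_record_below par c \<noteq> max_record_below par d"
    using distinct_max_records_below_if_no_132[OF no_132 strict_anc_trans[OF ab bc] cd] c
      \<open>c < a\<close> \<open>a < d\<close> by blast
  then have "?p c < ?p d"
    using class_rev_max_record_below_less_iff[OF cd] \<open>c < a\<close> \<open>a < d\<close> by simp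
  define z where "z = min_anc par c"
  have z: "is_record par z" "(z, c) \<in> strict_anc par" "z < c"
    using is_record_min_anc[OF bc] min_anc_strict_anc[OF bc] min_anc_le[OF bc] \<open>b < c\<close>
    unfolding z_def by force+
  then have "?p z < ?p c"
    using class_rev_max_record_below_less_iff[OF z(2)] class_rev_record[OF z(1)] by simp
  then show ?thesis
    unfolding contains_123_iff using z(2) cd \<open>?p c < ?p d\<close>
    by (intro exI[of _ "?p z"] exI[of _ "?p c"] exI[of _ "?p d"])
      (simp add: strict_anc_flip_classes_image)
qed

lemma flip_contains_132_or_3124:
  assumes "contains par [1, 2, 3] \<or> contains par [3, 1, 4, 2]"
  shows "contains (flip_classes max_record_below par) [1, 3, 2] \<or>
    contains (flip_classes max_record_below par) [3, 1, 2, 4]"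
proof (cases "contains par [1, 2, 3]")
  case True
  then show ?thesis
    unfolding contains_123_iff using flip_contains_132_or_3124_if_123 by blast
next
  case False
  then show ?thesis
    using assms flip_contains_132_if_3142[OF False] unfolding contains_3142_iff by blast
qed

lemma flip_contains_123_or_3142:
  assumes "contains par [1, 3, 2] \<or> contains par [3, 1, 2, 4]"
  shows "contains (flip_classes max_record_below par) [1, 2, 3] \<or>
    contains (flip_classes max_record_below par) [3, 1, 4, 2]"
proof (cases "contains par [1, 3, 2]")
  case True
  then show ?thesis
    unfolding contains_132_iff using flip_contains_123_or_3142_if_132 by blast
next
  case False
  then show ?thesis
    using assms flip_contains_123_if_3124[OF False] unfolding contains_3124_iff by blast
qed

text \<open>Each direction follows from the opposite pattern transfer, applied to the flipped forest.\<close>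
lemma flip_classes_max_record_below_avoids:
  shows "avoids par {[1, 2, 3], [3, 1, 4, 2]} \<Longrightarrow>
      avoids (flip_classes max_record_below par) {[1, 3, 2], [3, 1, 2, 4]}"
    and "avoids par {[1, 3, 2], [3, 1, 2, 4]} \<Longrightarrow>
      avoids (flip_classes max_record_below par) {[1, 2, 3], [3, 1, 4, 2]}"
proof -
  interpret flipped: labelled_forest n "flip_classes max_record_below par"
    by (rule labelled_forest_flip_classes)
  show "avoids par {[1, 2, 3], [3, 1, 4, 2]} \<Longrightarrow>
      avoids (flip_classes max_record_below par) {[1, 3, 2], [3, 1, 2, 4]}"
    using flipped.flip_contains_123_or_3142 flip_classes_max_record_below_involution
    unfolding avoids_pair by metis
  show "avoids par {[1, 3, 2], [3, 1, 2, 4]} \<Longrightarrow>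
      avoids (flip_classes max_record_below par) {[1, 2, 3], [3, 1, 4, 2]}"
    using flipped.flip_contains_132_or_3124 flip_classes_max_record_below_involution
    unfolding avoids_pair by metis
qed

end

theorem theorem3p4:
  shows "forest_wilf_equiv {[1,2,3], [2,4,1,3]} {[1,3,2], [2,3,1,4]} \<and>
         forest_wilf_equiv {[1,2,3], [3,1,4,2]} {[1,3,2], [3,1,2,4]}"
  unfolding forest_wilf_equiv_def
proof (intro conjI allI)
  fix n
  show "num_avoiding n {[1,2,3], [2,4,1,3]} = num_avoiding n {[1,3,2], [2,3,1,4]}"
    by (rule num_avoiding_eq_by_involution[where \<Phi> = "flip_classes min_anc",
          OF labelled_forest.labelled_forest_flip_classes
          labelled_forest.flip_classes_min_anc_involution
          labelled_forest.flip_classes_min_anc_avoids])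
  show "num_avoiding n {[1,2,3], [3,1,4,2]} = num_avoiding n {[1,3,2], [3,1,2,4]}"
    by (rule num_avoiding_eq_by_involution[where \<Phi> = "flip_classes max_record_below",
          OF labelled_forest.labelled_forest_flip_classes
          labelled_forest.flip_classes_max_record_below_involution
          labelled_forest.flip_classes_max_record_below_avoids])
qed

end
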